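(* Let $s \ge 2$ and $q \ge 1$ be integers with $2(q-s)^2<s-1$. Then $R(s,q) \le s+2(q-s)+2(q-s)^2$.
   Context: Let $Z_s$ be the ring of integers modulo $s$. A family $\mathcal{F} \subseteq Z_s^q$ is covering if for every ordered pair of distinct vectors $u,v \in \mathcal{F}$ and every $a \in Z_s$ there is a coordinate $i$ with $u_i - v_i = a$. $R(s,q)$ denotes the maximum possible cardinality of a covering family in $Z_s^q$. *)

theory Defs
  imports Main
begin

text \<open>Vectors of Z_s^q are represented as functions nat => int with entries in
  {0..<s} at coordinates i < q and 0 at all other coordinates (canonical representatives).\<close>

definition Zvecs :: "nat \<Rightarrow> nat \<Rightarrow> (nat \<Rightarrow> int) set" where
  "Zvecs s q = {u. (\<forall>i<q. 0 \<le> u i \<and> u i < int s) \<and> (\<forall>i\<ge>q. u i = 0)}"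

definition covering :: "nat \<Rightarrow> nat \<Rightarrow> (nat \<Rightarrow> int) set \<Rightarrow> bool" where
  "covering s q F \<longleftrightarrow> F \<subseteq> Zvecs s q \<and>
     (\<forall>u\<in>F. \<forall>v\<in>F. u \<noteq> v \<longrightarrow>
        (\<forall>a::int. 0 \<le> a \<and> a < int s \<longrightarrow> (\<exists>i<q. (u i - v i) mod int s = a)))"

definition R :: "nat \<Rightarrow> nat \<Rightarrow> nat" where
  "R s q = Max {card F | F. covering s q F}"

end

theory Submission
  imports Defs "HOL-Analysis.Convex"
begin

(* For distinct u, v in a covering family F, the coordinates of u - v (mod s) take all s values,
  so at most s + 2(q-s) + (q-s)^2 ordered pairs of positions carry equal entries.  Summing over
  all ordered pairs (u, v) and exchanging the order of summation, the same total counts, for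
  each pair of positions (i, j), the pairs (u, v) with u_i - u_j = v_i - v_j (mod s); by
  Cauchy-Schwarz there are at least |F|^2 / s of them, and |F|^2 when i = j.  Comparing gives
  |F| q (s+q-1) <= s (q^2 + (|F|-1)(s + 2(q-s) + (q-s)^2)), which under 2(q-s)^2 < s-1 forces
  |F| <= s + 2(q-s) + 2(q-s)^2. *)

definition coincidences :: "('a \<Rightarrow> 'b) \<Rightarrow> 'a set \<Rightarrow> nat" where
  "coincidences f I = (\<Sum>i\<in>I. \<Sum>j\<in>I. of_bool (f i = f j))"

lemma coincidences_const [simp]: "coincidences (\<lambda>_. c) I = card I ^ 2"
  by (simp add: coincidences_def power2_eq_square)

lemma sum_card_fibres:
  assumes "finite I" "finite A" "f ` I \<subseteq> A"
  shows "(\<Sum>a\<in>A. card {i\<in>I. f i = a}) = card I"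
  using sum.group[OF assms, of "\<lambda>_. 1::nat"] by simp

lemma coincidences_eq_sum_fibres:
  assumes "finite I" "finite A" "f ` I \<subseteq> A"
  shows "coincidences f I = (\<Sum>a\<in>A. card {i\<in>I. f i = a} ^ 2)"
proof -
  have "coincidences f I = (\<Sum>i\<in>I. card {j\<in>I. f j = f i})"
    unfolding coincidences_def using assms(1) by (intro sum.cong) (auto intro: arg_cong[where f=card])
  also have "\<dots> = (\<Sum>a\<in>A. \<Sum>i\<in>{i\<in>I. f i = a}. card {j\<in>I. f j = f i})"
    by (rule sum.group[OF assms, of "\<lambda>i. card {j\<in>I. f j = f i}", symmetric])
  also have "\<dots> = (\<Sum>a\<in>A. \<Sum>i\<in>{i\<in>I. f i = a}. card {j\<in>I. f j = a})"
    by (intro sum.cong) auto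
  also have "\<dots> = (\<Sum>a\<in>A. card {i\<in>I. f i = a} ^ 2)"
    by (simp add: power2_eq_square)
  finally show ?thesis .
qed

lemma sum_power2_le_power2_sum:
  fixes x :: "'a \<Rightarrow> nat"
  shows "(\<Sum>a\<in>A. x a ^ 2) \<le> (\<Sum>a\<in>A. x a) ^ 2"
proof (induction A rule: infinite_finite_induct)
  case (insert b A)
  then show ?case by (simp add: power2_sum)
qed simp_all

lemma power2_sum_le_card_mult_sum_power2:
  fixes x :: "'a \<Rightarrow> nat"
  shows "(\<Sum>a\<in>A. x a) ^ 2 \<le> card A * (\<Sum>a\<in>A. x a ^ 2)"
proof -
  have "(\<Sum>a\<in>A. real (x a)) ^ 2 \<le> (\<Sum>a\<in>A. real (x a) ^ 2) * card A"
    by (rule sum_squared_le_sum_of_squares)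
  then have "real ((\<Sum>a\<in>A. x a) ^ 2) \<le> real (card A * (\<Sum>a\<in>A. x a ^ 2))"
    by (simp only: of_nat_power of_nat_mult of_nat_sum mult.commute)
  then show ?thesis
    by (simp only: of_nat_le_iff)
qed

lemma power2_card_le_card_mult_coincidences:
  assumes "finite I" "finite A" "f ` I \<subseteq> A"
  shows "card I ^ 2 \<le> card A * coincidences f I"
  using power2_sum_le_card_mult_sum_power2[of "\<lambda>a. card {i\<in>I. f i = a}" A]
  by (simp add: sum_card_fibres[OF assms] coincidences_eq_sum_fibres[OF assms])

lemma coincidences_le_of_image_eq:
  assumes "finite I" and image: "f ` I = A"
  shows "coincidences f I \<le> card A + 2 * (card I - card A) + (card I - card A) ^ 2"
proof -
  have "finite A" using assms by blast
  define x where "x a = card {i\<in>I. f i = a} - 1" for a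
  have fibre: "card {i\<in>I. f i = a} = x a + 1" if "a \<in> A" for a
  proof -
    have "{i\<in>I. f i = a} \<noteq> {}" using that image by blast
    then show ?thesis using \<open>finite I\<close> by (simp add: x_def card_gt_0_iff)
  qed
  have "card I = (\<Sum>a\<in>A. card {i\<in>I. f i = a})"
    using sum_card_fibres[OF \<open>finite I\<close> \<open>finite A\<close>] image by simp
  also have "\<dots> = (\<Sum>a\<in>A. x a + 1)"
    using fibre by simp
  also have "\<dots> = (\<Sum>a\<in>A. x a) + card A"
    by (simp only: sum.distrib) simp
  finally have sum_x: "(\<Sum>a\<in>A. x a) = card I - card A"
    by simp
  have "coincidences f I = (\<Sum>a\<in>A. card {i\<in>I. f i = a} ^ 2)"
    using coincidences_eq_sum_fibres[OF \<open>finite I\<close> \<open>finite A\<close>] image by simp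
  also have "\<dots> = (\<Sum>a\<in>A. (x a + 1) ^ 2)"
    using fibre by simp
  also have "\<dots> = (\<Sum>a\<in>A. x a ^ 2) + 2 * (\<Sum>a\<in>A. x a) + card A"
    by (simp only: power2_sum sum.distrib sum_distrib_left) simp
  also have "\<dots> \<le> (\<Sum>a\<in>A. x a) ^ 2 + 2 * (\<Sum>a\<in>A. x a) + card A"
    using sum_power2_le_power2_sum[of x A] by (intro add_right_mono)
  finally show ?thesis
    by (simp only: sum_x)
qed

lemma sum_coincidences_of_differences:
  fixes F :: "('i \<Rightarrow> int) set" and n :: int
  shows "(\<Sum>u\<in>F. \<Sum>v\<in>F. coincidences (\<lambda>i. (u i - v i) mod n) I)
       = (\<Sum>i\<in>I. \<Sum>j\<in>I. coincidences (\<lambda>u. (u i - u j) mod n) F)"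
proof -
  define c where "c i j u v = (of_bool ((u i - u j) mod n = (v i - v j) mod n) :: nat)"
    for i j and u v :: "'i \<Rightarrow> int"
  have "(u i - v i) mod n = (u j - v j) mod n \<longleftrightarrow> (u i - u j) mod n = (v i - v j) mod n"
    for u v :: "'i \<Rightarrow> int" and i j
    by (simp add: mod_eq_dvd_iff algebra_simps)
  then have "(\<Sum>u\<in>F. \<Sum>v\<in>F. coincidences (\<lambda>i. (u i - v i) mod n) I)
      = (\<Sum>u\<in>F. \<Sum>v\<in>F. \<Sum>i\<in>I. \<Sum>j\<in>I. c i j u v)"
    by (simp add: coincidences_def c_def)
  also have "\<dots> = (\<Sum>u\<in>F. \<Sum>i\<in>I. \<Sum>v\<in>F. \<Sum>j\<in>I. c i j u v)"
    by (intro sum.cong refl sum.swap)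
  also have "\<dots> = (\<Sum>i\<in>I. \<Sum>u\<in>F. \<Sum>j\<in>I. \<Sum>v\<in>F. c i j u v)"
    by (subst sum.swap) (intro sum.cong refl sum.swap)
  also have "\<dots> = (\<Sum>i\<in>I. \<Sum>j\<in>I. coincidences (\<lambda>u. (u i - u j) mod n) F)"
    unfolding coincidences_def c_def by (intro sum.cong refl sum.swap)
  finally show ?thesis .
qed

lemma sum_coincidences_of_differences_ge:
  fixes F :: "('i \<Rightarrow> int) set" and s :: nat
  assumes "finite F" "finite I" "s > 0"
  shows "card F ^ 2 * card I * (s + card I - 1)
    \<le> s * (\<Sum>i\<in>I. \<Sum>j\<in>I. coincidences (\<lambda>u. (u i - u j) mod int s) F)"
proof -
  let ?X = "\<lambda>i j. coincidences (\<lambda>u. (u i - u j) mod int s) F"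
  have off_diagonal: "card F ^ 2 \<le> s * ?X i j" for i j
  proof -
    have "(\<lambda>u. (u i - u j) mod int s) ` F \<subseteq> {0..<int s}"
      using \<open>s > 0\<close> by auto
    from power2_card_le_card_mult_coincidences[OF \<open>finite F\<close> _ this]
    show ?thesis by simp
  qed
  have row: "card F ^ 2 * (s + card I - 1) \<le> s * (\<Sum>j\<in>I. ?X i j)" if "i \<in> I" for i
  proof -
    have "s + card I - 1 = s + card (I - {i})"
      using card.remove[OF \<open>finite I\<close> \<open>i \<in> I\<close>] by simp
    then have "card F ^ 2 * (s + card I - 1) = s * card F ^ 2 + (\<Sum>j\<in>I - {i}. card F ^ 2)"
      by (simp add: algebra_simps)
    also have "\<dots> \<le> s * card F ^ 2 + (\<Sum>j\<in>I - {i}. s * ?X i j)"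
      using off_diagonal by (intro add_left_mono sum_mono)
    also have "\<dots> = s * (\<Sum>j\<in>I. ?X i j)"
      using sum.remove[OF \<open>finite I\<close> \<open>i \<in> I\<close>, of "?X i"] by (simp add: distrib_left sum_distrib_left)
    finally show ?thesis .
  qed
  have "card F ^ 2 * card I * (s + card I - 1) = (\<Sum>i\<in>I. card F ^ 2 * (s + card I - 1))"
    by simp
  also have "\<dots> \<le> (\<Sum>i\<in>I. s * (\<Sum>j\<in>I. ?X i j))"
    using row by (intro sum_mono)
  finally show ?thesis
    by (simp add: sum_distrib_left)
qed

lemma covering_difference_image:
  assumes "covering s q F" "u \<in> F" "v \<in> F" "u \<noteq> v" "s > 0"
  shows "(\<lambda>i. (u i - v i) mod int s) ` {..<q} = {0..<int s}"
  using assms unfolding covering_def by (fastforce simp: image_iff)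

lemma covering_distinct_imp_le:
  assumes "covering s q F" "u \<in> F" "v \<in> F" "u \<noteq> v" "s > 0"
  shows "s \<le> q"
  using card_image_le[of "{..<q}" "\<lambda>i. (u i - v i) mod int s"]
  by (simp add: covering_difference_image[OF assms])

lemma covering_sum_coincidences_of_differences_le:
  assumes "covering s q F" "finite F" "s > 0"
  shows "(\<Sum>u\<in>F. \<Sum>v\<in>F. coincidences (\<lambda>i. (u i - v i) mod int s) {..<q})
    \<le> card F * (q^2 + (card F - 1) * (s + 2 * (q - s) + (q - s)^2))"
proof -
  let ?h = "\<lambda>u v. coincidences (\<lambda>i. (u i - v i) mod int s) {..<q}"
  let ?T = "s + 2 * (q - s) + (q - s)^2"
  have row: "(\<Sum>v\<in>F. ?h u v) \<le> q^2 + (card F - 1) * ?T" if "u \<in> F" for u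
  proof -
    have "?h u v \<le> ?T" if "v \<in> F" "v \<noteq> u" for v
      using coincidences_le_of_image_eq[OF _ covering_difference_image[OF assms(1) \<open>u \<in> F\<close> that(1)]]
        that(2) \<open>s > 0\<close> by simp
    then have "(\<Sum>v\<in>F - {u}. ?h u v) \<le> (card F - 1) * ?T"
      using sum_bounded_above[of "F - {u}" "?h u" ?T] \<open>u \<in> F\<close> \<open>finite F\<close> by simp
    moreover have "(\<Sum>v\<in>F. ?h u v) = q^2 + (\<Sum>v\<in>F - {u}. ?h u v)"
      using sum.remove[OF \<open>finite F\<close> \<open>u \<in> F\<close>, of "?h u"] by simp
    ultimately show ?thesis by simp
  qed
  show ?thesis
    using sum_bounded_above[of F "\<lambda>u. \<Sum>v\<in>F. ?h u v"] row by simp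
qed

lemma covering_double_counting:
  assumes "covering s q F" "finite F" "s > 0"
  shows "card F * q * (s + q - 1) \<le> s * (q^2 + (card F - 1) * (s + 2 * (q - s) + (q - s)^2))"
proof -
  let ?m = "card F" and ?T = "s + 2 * (q - s) + (q - s)^2"
  have "?m * (?m * q * (s + q - 1)) = ?m^2 * card {..<q} * (s + card {..<q} - 1)"
    by (simp add: power2_eq_square)
  also have "\<dots> \<le> s * (\<Sum>i<q. \<Sum>j<q. coincidences (\<lambda>u. (u i - u j) mod int s) F)"
    using sum_coincidences_of_differences_ge[OF \<open>finite F\<close> _ \<open>s > 0\<close>] by blast
  also have "\<dots> = s * (\<Sum>u\<in>F. \<Sum>v\<in>F. coincidences (\<lambda>i. (u i - v i) mod int s) {..<q})"
    by (simp only: sum_coincidences_of_differences)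
  also have "\<dots> \<le> s * (?m * (q^2 + (?m - 1) * ?T))"
    using covering_sum_coincidences_of_differences_le[OF assms] by (rule mult_left_mono) simp
  also have "\<dots> = ?m * (s * (q^2 + (?m - 1) * ?T))"
    by (rule mult.left_commute)
  finally show ?thesis
    by (cases "?m = 0") (simp_all only: mult_le_cancel1 mult_0 zero_le not_gr0)
qed

lemma le_add_two_mult_add_two_power2:
  fixes s d :: int
  shows "s \<le> s + 2 * d + 2 * d^2"
proof -
  have "0 \<le> d * (d + 1)"
    by (cases "d \<ge> 0") (auto intro: mult_nonneg_nonneg mult_nonpos_nonpos)
  then show ?thesis
    by (simp add: power2_eq_square algebra_simps)
qed

lemma le_of_double_counting_inequality:
  fixes s q m :: int
  assumes "s \<ge> 2" "q \<ge> s" "2 * (q - s)^2 < s - 1"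
    and double_counting: "m * q * (s + q - 1) \<le> s * (q^2 + (m - 1) * (s + 2 * (q - s) + (q - s)^2))"
  shows "m \<le> s + 2 * (q - s) + 2 * (q - s)^2"
proof -
  define d where "d = q - s"
  have "q = s + d" "d \<ge> 0" "2 * d^2 < s - 1"
    using assms by (simp_all add: d_def)
  have pos: "0 < s + d - d^2"
    using \<open>d \<ge> 0\<close> \<open>2 * d^2 < s - 1\<close> by (smt (verit) zero_le_power2)
  have "s * (q^2 + (m - 1) * (s + 2 * d + d^2)) - m * q * (s + q - 1)
      = (s - 1) * (s * (s + 2 * d) - m * (s + d - d^2))"
    unfolding \<open>q = s + d\<close> by (simp add: algebra_simps power2_eq_square)
  then have "m * (s + d - d^2) \<le> s * (s + 2 * d)"
    using double_counting \<open>s \<ge> 2\<close> unfolding d_def by (smt (verit) mult_pos_neg)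
  also have "\<dots> < (s + 2 * d + 2 * d^2 + 1) * (s + d - d^2)"
  proof -
    have "s * (1 + d) \<ge> (2 * d^2) * (1 + d)"
      using \<open>d \<ge> 0\<close> \<open>2 * d^2 < s - 1\<close> by (intro mult_right_mono) auto
    then have "0 \<le> s + s * d + 2 * d - 2 * d^3"
      using \<open>d \<ge> 0\<close> by (simp add: algebra_simps power2_eq_square power3_eq_cube)
        (smt (verit) mult_nonneg_nonneg)
    then have "0 \<le> d * (s + s * d + 2 * d - 2 * d^3)"
      using \<open>d \<ge> 0\<close> by simp
    moreover have "(s + 2 * d + 2 * d^2 + 1) * (s + d - d^2) - s * (s + 2 * d)
        = d * (s + s * d + 2 * d - 2 * d^3) + (s + d - d^2)"
      by (simp add: algebra_simps power2_eq_square power3_eq_cube)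
    ultimately show ?thesis using pos by linarith
  qed
  finally show ?thesis
    using pos unfolding d_def by (simp add: mult_less_cancel_right)
qed

lemma covering_card_le:
  assumes "s \<ge> 2" "2 * (int q - int s)^2 < int s - 1" "covering s q F"
  shows "int (card F) \<le> int s + 2 * (int q - int s) + 2 * (int q - int s)^2"
proof (cases "card F \<le> 1")
  case True
  then have "int (card F) \<le> int s"
    using \<open>s \<ge> 2\<close> by simp
  also have "\<dots> \<le> int s + 2 * (int q - int s) + 2 * (int q - int s)^2"
    by (rule le_add_two_mult_add_two_power2)
  finally show ?thesis .
next
  case False
  then have "finite F" and "card F \<ge> 2"
    using card.infinite by fastforce+
  then obtain u v where "u \<in> F" "v \<in> F" "u \<noteq> v"
    by (metis card_le_Suc0_iff_eq not_less_eq_eq numeral_2_eq_2)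
  then have "s \<le> q"
    using covering_distinct_imp_le \<open>covering s q F\<close> \<open>s \<ge> 2\<close> by simp
  have "int (card F * q * (s + q - 1))
      \<le> int (s * (q^2 + (card F - 1) * (s + 2 * (q - s) + (q - s)^2)))"
    using covering_double_counting[OF \<open>covering s q F\<close> \<open>finite F\<close>] \<open>s \<ge> 2\<close>
    by (simp only: of_nat_le_iff)
  then have "int (card F) * int q * (int s + int q - 1)
      \<le> int s * ((int q)^2 + (int (card F) - 1)
          * (int s + 2 * (int q - int s) + (int q - int s)^2))"
    using \<open>s \<le> q\<close> \<open>s \<ge> 2\<close> \<open>card F \<ge> 2\<close> by simp
  then show ?thesis
    by (intro le_of_double_counting_inequality) (use assms(1,2) \<open>s \<le> q\<close> in simp_all)
qed

lemma R_le:
  assumes "\<And>F. covering s q F \<Longrightarrow> card F \<le> n"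
  shows "R s q \<le> n"
proof -
  have bounded: "{card F | F. covering s q F} \<subseteq> {..n}"
    using assms by blast
  have "covering s q {}"
    by (simp add: covering_def)
  then have "{card F | F. covering s q F} \<noteq> {}"
    by blast
  then show ?thesis
    unfolding R_def using bounded finite_subset[OF bounded] by (simp add: subset_eq)
qed

theorem proposition4p2:
  fixes s q :: nat
  assumes "s \<ge> 2" and "q \<ge> 1"
    and "2 * (int q - int s)^2 < int s - 1"
  shows "int (R s q) \<le> int s + 2 * (int q - int s) + 2 * (int q - int s)^2"
proof -
  let ?B = "int s + 2 * (int q - int s) + 2 * (int q - int s)^2"
  have "R s q \<le> nat ?B"
    using covering_card_le[OF assms(1,3)] by (intro R_le) fastforce
  moreover have "?B \<ge> 0"
    using le_add_two_mult_add_two_power2[of "int s" "int q - int s"] by linarith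
  ultimately show ?thesis
    by linarith
qed

end
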